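(* Let $A\in\mathcal{B}(p)$ (defined in the context). Then $A\succ 0$ if and only if $\phi(A)\succ 0$, where explicitly $$\phi(A)=\begin{pmatrix}\alpha_1 & c_{1,2} & \cdots & c_{1,p}\\ c_{1,2} & \alpha_2 & \ddots & \vdots\\ \vdots & \ddots & \ddots & c_{p-1,p}\\ c_{1,p} & \cdots & c_{p-1,p} & \alpha_p\end{pmatrix},\qquad \alpha_k=\frac{1}{n_k}+\frac{n_k-1}{n_k}b_k .$$
   Context: All matrices are real; $\succ 0$ means symmetric positive definite. $J_m$ is the $m\times m$ matrix of ones, $J_{m,q}=\mathbf 1_m\mathbf 1_q^\top$. For integers $p\ge1$ and $n_1,\dots,n_p\ge 1$, $n=\sum_k n_k$, $\mathcal{B}(p)$ is the set of symmetric $n\times n$ block matrices $A=(A_{k,\ell})_{1\le k,\ell\le p}$ (block $A_{k,\ell}$ of size $n_k\times n_\ell$) with diagonal blocks $A_{k,k}=(1-b_k)I_{n_k}+b_kJ_{n_k}$ (ones on the diagonal, $b_k$ off the diagonal) and off-diagonal blocks $A_{k,\ell}=A_{\ell,k}^\top=c_{k,\ell}J_{n_k,n_\ell}$ for $k<\ell$, where all parameters $b_k,c_{k,\ell}$ lie in $]-1,1[$, with the convention $b_k=0$ when $n_k=1$. The block average map $\phi$ sends $A$ to the $p\times p$ matrix $[\phi(A)]_{k,\ell}=\frac{1}{n_kn_\ell}\sum_{i\in G_k,j\in G_\ell}A_{i,j}$, where $G_1$ is the first $n_1$ indices, $G_2$ the next $n_2$, and so on. *)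

theory Defs
  imports "Jordan_Normal_Form.Matrix"
begin

definition pos_def_mat :: "real mat \<Rightarrow> bool" where
  "pos_def_mat A \<longleftrightarrow> A \<in> carrier_mat (dim_row A) (dim_row A) \<and> A\<^sup>T = A \<and>
     (\<forall>x \<in> carrier_vec (dim_row A). x \<noteq> 0\<^sub>v (dim_row A) \<longrightarrow> x \<bullet> (A *\<^sub>v x) > 0)"

definition grp :: "(nat \<Rightarrow> nat) \<Rightarrow> nat \<Rightarrow> nat set" where
  "grp n k = {(\<Sum>j<k. n j) ..< (\<Sum>j<Suc k. n j)}"

definition tot :: "nat \<Rightarrow> (nat \<Rightarrow> nat) \<Rightarrow> nat" where
  "tot p n = (\<Sum>k<p. n k)"

definition in_Bp :: "nat \<Rightarrow> (nat \<Rightarrow> nat) \<Rightarrow> (nat \<Rightarrow> real) \<Rightarrow> (nat \<Rightarrow> nat \<Rightarrow> real)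
    \<Rightarrow> real mat \<Rightarrow> bool" where
  "in_Bp p n b c A \<longleftrightarrow>
     p \<ge> 1 \<and> (\<forall>k<p. n k \<ge> 1) \<and>
     (\<forall>k<p. -1 < b k \<and> b k < 1) \<and>
     (\<forall>k<p. \<forall>l<p. k < l \<longrightarrow> -1 < c k l \<and> c k l < 1) \<and>
     (\<forall>k<p. n k = 1 \<longrightarrow> b k = 0) \<and>
     A \<in> carrier_mat (tot p n) (tot p n) \<and>
     (\<forall>k<p. \<forall>l<p. \<forall>i\<in>grp n k. \<forall>j\<in>grp n l.
        A $$ (i, j) = (if k = l then (if i = j then 1 else b k)
                       else if k < l then c k l else c l k))"

definition block_avg :: "nat \<Rightarrow> (nat \<Rightarrow> nat) \<Rightarrow> real mat \<Rightarrow> real mat" where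
  "block_avg p n A = mat p p (\<lambda>(k, l).
     (1 / (real (n k) * real (n l))) * (\<Sum>i\<in>grp n k. \<Sum>j\<in>grp n l. A $$ (i, j)))"

end

theory Submission
  imports Defs
begin

text \<open>Write \<open>s\<^sub>k(x)\<close> for the sum of the entries of \<open>x\<close> in block \<open>k\<close> and \<open>\<beta>\<^sub>k\<^sub>l\<close> for the
  common value of the off-diagonal entries of block \<open>(k, l)\<close>. Then
  \<open>x\<^sup>T A x = \<Sum>\<^sub>k (1 - b\<^sub>k) \<parallel>x\<^sub>k\<parallel>\<^sup>2 + \<Sum>\<^sub>k\<^sub>l \<beta>\<^sub>k\<^sub>l s\<^sub>k(x) s\<^sub>l(x)\<close> and
  \<open>z\<^sup>T \<phi>(A) z = \<Sum>\<^sub>k (1 - b\<^sub>k) z\<^sub>k\<^sup>2 / n\<^sub>k + \<Sum>\<^sub>k\<^sub>l \<beta>\<^sub>k\<^sub>l z\<^sub>k z\<^sub>l\<close>.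
  Since \<open>b\<^sub>k < 1\<close>, Cauchy-Schwarz \<open>s\<^sub>k(x)\<^sup>2 \<le> n\<^sub>k \<parallel>x\<^sub>k\<parallel>\<^sup>2\<close> gives \<open>z\<^sup>T \<phi>(A) z \<le> x\<^sup>T A x\<close> for
  \<open>z = s(x)\<close>, with equality when \<open>x\<close> is constant on every block. Hence positivity of
  \<open>\<phi>(A)\<close> transfers to every \<open>x\<close> with \<open>s(x) \<noteq> 0\<close>; if \<open>x \<noteq> 0\<close> but \<open>s(x) = 0\<close>, only the
  positive first term survives. Conversely every \<open>z\<close> is \<open>s(x)\<close> for a block-constant \<open>x\<close>.\<close>

lemma square_sum_le_card_mult_sum_squares:
  fixes f :: "'a \<Rightarrow> real"
  shows "(\<Sum>i\<in>I. f i)\<^sup>2 \<le> (\<Sum>i\<in>I. (f i)\<^sup>2) * real (card I)"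
proof -
  have "(\<Sum>i\<in>I. \<Sum>j\<in>I. (f i - f j)\<^sup>2)
      = (\<Sum>i\<in>I. \<Sum>j\<in>I. (f i)\<^sup>2) + (\<Sum>i\<in>I. \<Sum>j\<in>I. (f j)\<^sup>2) - 2 * (\<Sum>i\<in>I. \<Sum>j\<in>I. f i * f j)"
    by (simp add: power2_diff sum.distrib sum_subtractf sum_distrib_left mult.assoc)
  also have "(\<Sum>i\<in>I. \<Sum>j\<in>I. (f i)\<^sup>2) = (\<Sum>i\<in>I. (f i)\<^sup>2) * real (card I)"
    by (simp add: sum_distrib_left mult.commute)
  also have "(\<Sum>i\<in>I. \<Sum>j\<in>I. (f j)\<^sup>2) = (\<Sum>i\<in>I. (f i)\<^sup>2) * real (card I)"
    by (simp add: mult.commute)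
  also have "(\<Sum>i\<in>I. \<Sum>j\<in>I. f i * f j) = (\<Sum>i\<in>I. f i)\<^sup>2"
    by (simp add: power2_eq_square sum_product)
  finally have "(\<Sum>i\<in>I. \<Sum>j\<in>I. (f i - f j)\<^sup>2)
      = 2 * ((\<Sum>i\<in>I. (f i)\<^sup>2) * real (card I)) - 2 * (\<Sum>i\<in>I. f i)\<^sup>2"
    by simp
  moreover have "0 \<le> (\<Sum>i\<in>I. \<Sum>j\<in>I. (f i - f j)\<^sup>2)"
    by (intro sum_nonneg) simp
  ultimately show ?thesis
    by simp
qed

lemma sum_lessThan_tot: "(\<Sum>i<tot p n. f i) = (\<Sum>k<p. \<Sum>i\<in>grp n k. f i)"
proof (induction p)
  case 0
  then show ?case by (simp add: tot_def)
next
  case (Suc p)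
  have "(\<Sum>i<tot (Suc p) n. f i) = (\<Sum>i\<in>{0..<tot p n}. f i) + (\<Sum>i\<in>{tot p n..<tot (Suc p) n}. f i)"
    by (subst sum.atLeastLessThan_concat) (auto simp: tot_def atLeast0LessThan)
  then show ?case
    using Suc by (simp add: tot_def grp_def atLeast0LessThan)
qed

lemma finite_grp [simp]: "finite (grp n k)"
  by (simp add: grp_def)

lemma card_grp [simp]: "card (grp n k) = n k"
  by (simp add: grp_def)

lemma grp_less_tot: "k < p \<Longrightarrow> i \<in> grp n k \<Longrightarrow> i < tot p n"
  using sum_mono2[of "{..<p}" "{..<Suc k}" n] by (auto simp: grp_def tot_def)

lemma grp_unique:
  assumes "i \<in> grp n k" "i \<in> grp n l"
  shows "k = l"
proof -
  have False if "i \<in> grp n k" "i \<in> grp n l" "k < l" for k l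
    using that sum_mono2[of "{..<l}" "{..<Suc k}" n] by (auto simp: grp_def)
  with assms show ?thesis
    by (metis linorder_neqE)
qed

lemma sum_if_mem_grp:
  assumes "k < p" "i \<in> grp n k"
  shows "(\<Sum>l<p. if i \<in> grp n l then f l else 0) = f k"
proof -
  have "i \<in> grp n l \<longleftrightarrow> l = k" for l
    using assms(2) grp_unique[OF assms(2)] by blast
  with assms(1) show ?thesis
    by simp
qed

lemma ex_grp: "i < tot p n \<Longrightarrow> \<exists>k<p. i \<in> grp n k"
proof (induction p)
  case 0
  then show ?case by (simp add: tot_def)
next
  case (Suc p)
  show ?case
  proof (cases "i < tot p n")
    case True
    then show ?thesis using Suc.IH by (meson less_SucI)
  next
    case False
    then have "i \<in> grp n p" using Suc.prems by (auto simp: grp_def tot_def)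
    then show ?thesis by auto
  qed
qed

lemma scalar_prod_mult_mat_vec_double_sum:
  fixes M :: "'a :: comm_semiring_0 mat"
  assumes "M \<in> carrier_mat m m" "x \<in> carrier_vec m"
  shows "x \<bullet> (M *\<^sub>v x) = (\<Sum>i<m. \<Sum>j<m. x $ i * M $$ (i, j) * x $ j)"
  using assms
  by (simp add: scalar_prod_def sum_distrib_left atLeast0LessThan mult.assoc mult.left_commute)

lemma pos_def_mat_iff:
  assumes "M \<in> carrier_mat m m" "M\<^sup>T = M"
  shows "pos_def_mat M \<longleftrightarrow> (\<forall>x \<in> carrier_vec m. x \<noteq> 0\<^sub>v m \<longrightarrow> x \<bullet> (M *\<^sub>v x) > 0)"
  using assms by (auto simp: pos_def_mat_def)

definition block_param :: "(nat \<Rightarrow> real) \<Rightarrow> (nat \<Rightarrow> nat \<Rightarrow> real) \<Rightarrow> nat \<Rightarrow> nat \<Rightarrow> real" where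
  "block_param b c k l = (if k = l then b k else if k < l then c k l else c l k)"

definition block_sum :: "(nat \<Rightarrow> nat) \<Rightarrow> real vec \<Rightarrow> nat \<Rightarrow> real" where
  "block_sum n x k = (\<Sum>i\<in>grp n k. x $ i)"

text \<open>The matrix \<open>\<phi>(A)\<close>, with its diagonal written as \<open>(1 - b\<^sub>k) / n\<^sub>k + b\<^sub>k\<close>.\<close>
definition avg_mat :: "nat \<Rightarrow> (nat \<Rightarrow> nat) \<Rightarrow> (nat \<Rightarrow> real) \<Rightarrow> (nat \<Rightarrow> nat \<Rightarrow> real) \<Rightarrow> real mat" where
  "avg_mat p n b c =
     mat p p (\<lambda>(k, l). (if k = l then (1 - b k) / real (n k) else 0) + block_param b c k l)"

definition block_lift :: "nat \<Rightarrow> (nat \<Rightarrow> nat) \<Rightarrow> real vec \<Rightarrow> real vec" where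
  "block_lift p n z = vec (tot p n) (\<lambda>i. \<Sum>k<p. if i \<in> grp n k then z $ k / real (n k) else 0)"

lemma block_param_sym: "block_param b c k l = block_param b c l k"
  by (auto simp: block_param_def)

lemma in_Bp_carrier: "in_Bp p n b c A \<Longrightarrow> A \<in> carrier_mat (tot p n) (tot p n)"
  by (simp add: in_Bp_def)

lemma in_Bp_entry:
  assumes "in_Bp p n b c A" "k < p" "l < p" "i \<in> grp n k" "j \<in> grp n l"
  shows "A $$ (i, j) = (if i = j then 1 - b k else 0) + block_param b c k l"
proof -
  have "i = j \<Longrightarrow> k = l"
    using assms(4,5) grp_unique by blast
  then show ?thesis
    using assms by (auto simp: in_Bp_def block_param_def)
qed

lemma in_Bp_symmetric:
  assumes A: "in_Bp p n b c A"
  shows "A\<^sup>T = A"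
proof (rule eq_matI)
  fix i j
  assume "i < dim_row A" "j < dim_col A"
  then have "i < tot p n" "j < tot p n"
    using in_Bp_carrier[OF A] by auto
  moreover obtain k l where "k < p" "i \<in> grp n k" "l < p" "j \<in> grp n l"
    using ex_grp \<open>i < tot p n\<close> \<open>j < tot p n\<close> by metis
  moreover have "i = j \<Longrightarrow> k = l"
    using grp_unique \<open>i \<in> grp n k\<close> \<open>j \<in> grp n l\<close> by blast
  ultimately show "A\<^sup>T $$ (i, j) = A $$ (i, j)"
    using in_Bp_carrier[OF A] by (auto simp: in_Bp_entry[OF A] block_param_sym)
qed (use in_Bp_carrier[OF A] in auto)

lemma avg_mat_carrier: "avg_mat p n b c \<in> carrier_mat p p"
  by (simp add: avg_mat_def)

lemma avg_mat_symmetric: "(avg_mat p n b c)\<^sup>T = avg_mat p n b c"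
  by (rule eq_matI) (auto simp: avg_mat_def block_param_sym)

lemma block_avg_eq_avg_mat:
  assumes A: "in_Bp p n b c A"
  shows "block_avg p n A = avg_mat p n b c"
proof (rule eq_matI)
  fix k l
  assume "k < dim_row (avg_mat p n b c)" "l < dim_col (avg_mat p n b c)"
  then have k: "k < p" and l: "l < p"
    by (auto simp: avg_mat_def)
  have row_sum: "(\<Sum>j\<in>grp n l. A $$ (i, j)) = (if k = l then 1 - b k else 0) + real (n l) * block_param b c k l"
    if i: "i \<in> grp n k" for i
  proof -
    have "(\<Sum>j\<in>grp n l. A $$ (i, j)) = (\<Sum>j\<in>grp n l. (if i = j then 1 - b k else 0) + block_param b c k l)"
      by (rule sum.cong) (simp_all add: in_Bp_entry[OF A k l i])
    also have "\<dots> = (if i \<in> grp n l then 1 - b k else 0) + real (n l) * block_param b c k l"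
      by (simp add: sum.distrib)
    also have "i \<in> grp n l \<longleftrightarrow> k = l"
      using i grp_unique[OF i] by blast
    finally show ?thesis .
  qed
  have "n k \<ge> 1" "n l \<ge> 1"
    using A k l by (auto simp: in_Bp_def)
  then show "block_avg p n A $$ (k, l) = avg_mat p n b c $$ (k, l)"
    using k l by (simp add: block_avg_def avg_mat_def row_sum field_simps)
qed (auto simp: block_avg_def avg_mat_def)

lemma avg_mat_eq:
  assumes "\<And>k. k < p \<Longrightarrow> n k \<ge> 1"
  shows "avg_mat p n b c = mat p p (\<lambda>(k, l).
            if k = l then 1 / real (n k) + (real (n k) - 1) / real (n k) * b k
            else if k < l then c k l else c l k)"
proof -
  have "k < p \<Longrightarrow> real (n k) \<noteq> 0" for k
    using assms by fastforce
  then show ?thesis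
    by (intro eq_matI) (auto simp: avg_mat_def block_param_def field_simps)
qed

lemma quadratic_form_in_Bp:
  assumes A: "in_Bp p n b c A" and x: "x \<in> carrier_vec (tot p n)"
  shows "x \<bullet> (A *\<^sub>v x) = (\<Sum>k<p. (1 - b k) * (\<Sum>i\<in>grp n k. (x $ i)\<^sup>2))
      + (\<Sum>k<p. \<Sum>l<p. block_param b c k l * block_sum n x k * block_sum n x l)"
proof -
  have "x \<bullet> (A *\<^sub>v x) = (\<Sum>k<p. \<Sum>i\<in>grp n k. \<Sum>l<p. \<Sum>j\<in>grp n l.
      (if i = j then (1 - b k) * (x $ i)\<^sup>2 else 0) + block_param b c k l * x $ i * x $ j)"
    unfolding scalar_prod_mult_mat_vec_double_sum[OF in_Bp_carrier[OF A] x] sum_lessThan_tot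
    by (intro sum.cong refl) (simp add: in_Bp_entry[OF A] algebra_simps power2_eq_square)
  also have "\<dots> = (\<Sum>k<p. \<Sum>i\<in>grp n k. (1 - b k) * (x $ i)\<^sup>2
      + (\<Sum>l<p. block_param b c k l * x $ i * block_sum n x l))"
    by (intro sum.cong refl)
      (simp add: sum.distrib sum_if_mem_grp block_sum_def sum_distrib_left mult.assoc)
  also have "\<dots> = (\<Sum>k<p. (1 - b k) * (\<Sum>i\<in>grp n k. (x $ i)\<^sup>2))
      + (\<Sum>k<p. \<Sum>l<p. block_param b c k l * block_sum n x k * block_sum n x l)"
  proof -
    have "(\<Sum>i\<in>grp n k. \<Sum>l<p. block_param b c k l * x $ i * block_sum n x l)
        = (\<Sum>l<p. block_param b c k l * block_sum n x k * block_sum n x l)" for k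
      by (subst sum.swap) (simp add: block_sum_def sum_distrib_left sum_distrib_right mult_ac)
    then show ?thesis
      by (simp add: sum.distrib sum_distrib_left)
  qed
  finally show ?thesis .
qed

lemma quadratic_form_avg_mat:
  assumes z: "z \<in> carrier_vec p"
  shows "z \<bullet> (avg_mat p n b c *\<^sub>v z)
     = (\<Sum>k<p. (1 - b k) / real (n k) * (z $ k)\<^sup>2) + (\<Sum>k<p. \<Sum>l<p. block_param b c k l * z $ k * z $ l)"
proof -
  have "z \<bullet> (avg_mat p n b c *\<^sub>v z) = (\<Sum>k<p. \<Sum>l<p.
      (if l = k then (1 - b k) / real (n k) * (z $ k)\<^sup>2 else 0) + block_param b c k l * z $ k * z $ l)"
    unfolding scalar_prod_mult_mat_vec_double_sum[OF avg_mat_carrier z]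
    by (intro sum.cong refl) (auto simp: avg_mat_def algebra_simps power2_eq_square)
  then show ?thesis
    by (simp add: sum.distrib)
qed

lemma block_lift_index:
  assumes "k < p" "i \<in> grp n k"
  shows "block_lift p n z $ i = z $ k / real (n k)"
  using assms grp_less_tot by (simp add: block_lift_def sum_if_mem_grp)

lemma block_sum_block_lift:
  assumes "k < p" "n k \<ge> 1"
  shows "block_sum n (block_lift p n z) k = z $ k"
  using assms by (simp add: block_sum_def block_lift_index)

lemma quadratic_form_block_lift:
  assumes A: "in_Bp p n b c A" and z: "z \<in> carrier_vec p"
  shows "block_lift p n z \<bullet> (A *\<^sub>v block_lift p n z) = z \<bullet> (avg_mat p n b c *\<^sub>v z)"
proof -
  have n: "k < p \<Longrightarrow> n k \<ge> 1" for k
    using A by (simp add: in_Bp_def)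
  have sums: "block_sum n (block_lift p n z) k = z $ k" if "k < p" for k
    using that n[OF that] by (rule block_sum_block_lift)
  have squares: "(\<Sum>i\<in>grp n k. (block_lift p n z $ i)\<^sup>2) = (z $ k)\<^sup>2 / real (n k)" if "k < p" for k
    using that n[OF that] by (simp add: block_lift_index power2_eq_square)
  have "block_lift p n z \<in> carrier_vec (tot p n)"
    by (simp add: block_lift_def)
  then show ?thesis
    unfolding quadratic_form_in_Bp[OF A \<open>block_lift p n z \<in> carrier_vec (tot p n)\<close>]
      quadratic_form_avg_mat[OF z]
    by (intro arg_cong2[where f = "(+)"] sum.cong) (simp_all add: sums squares)
qed

lemma quadratic_form_avg_mat_le:
  assumes A: "in_Bp p n b c A" and x: "x \<in> carrier_vec (tot p n)"
  shows "vec p (block_sum n x) \<bullet> (avg_mat p n b c *\<^sub>v vec p (block_sum n x)) \<le> x \<bullet> (A *\<^sub>v x)"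
proof -
  have "(\<Sum>k<p. (1 - b k) / real (n k) * (block_sum n x k)\<^sup>2)
      \<le> (\<Sum>k<p. (1 - b k) * (\<Sum>i\<in>grp n k. (x $ i)\<^sup>2))"
  proof (rule sum_mono)
    fix k
    assume "k \<in> {..<p}"
    then have "n k \<ge> 1" "b k < 1"
      using A by (auto simp: in_Bp_def)
    moreover have "(block_sum n x k)\<^sup>2 \<le> (\<Sum>i\<in>grp n k. (x $ i)\<^sup>2) * real (n k)"
      using square_sum_le_card_mult_sum_squares[of "\<lambda>i. x $ i" "grp n k"]
      by (simp add: block_sum_def grp_def)
    ultimately show "(1 - b k) / real (n k) * (block_sum n x k)\<^sup>2 \<le> (1 - b k) * (\<Sum>i\<in>grp n k. (x $ i)\<^sup>2)"
      by (simp add: divide_le_eq mult_left_mono mult.left_commute)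
  qed
  then show ?thesis
    by (simp add: quadratic_form_in_Bp[OF A x] quadratic_form_avg_mat)
qed

lemma quadratic_form_pos_if_block_sums_zero:
  assumes A: "in_Bp p n b c A" and x: "x \<in> carrier_vec (tot p n)" "x \<noteq> 0\<^sub>v (tot p n)"
    and zero: "\<And>k. k < p \<Longrightarrow> block_sum n x k = 0"
  shows "x \<bullet> (A *\<^sub>v x) > 0"
proof -
  obtain i where i: "i < tot p n" "x $ i \<noteq> 0"
    using x by (metis carrier_vecD eq_vecI index_zero_vec)
  then obtain k where k: "k < p" "i \<in> grp n k"
    using ex_grp by blast
  have b: "l < p \<Longrightarrow> 0 < 1 - b l" for l
    using A by (simp add: in_Bp_def)
  have "0 < (\<Sum>i\<in>grp n k. (x $ i)\<^sup>2)"
    using i k by (intro sum_pos2[of _ i]) (auto simp: grp_def)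
  then have "0 < (\<Sum>l<p. (1 - b l) * (\<Sum>i\<in>grp n l. (x $ i)\<^sup>2))"
    using k b by (intro sum_pos2[of _ k]) (auto intro!: mult_nonneg_nonneg sum_nonneg less_imp_le[OF b])
  then show ?thesis
    by (simp add: quadratic_form_in_Bp[OF A x(1)] zero)
qed

lemma pos_def_avg_mat_if_pos_def:
  assumes A: "in_Bp p n b c A" and pd: "pos_def_mat A"
  shows "pos_def_mat (avg_mat p n b c)"
  unfolding pos_def_mat_iff[OF avg_mat_carrier avg_mat_symmetric]
proof (intro ballI impI)
  fix z :: "real vec"
  assume z: "z \<in> carrier_vec p" "z \<noteq> 0\<^sub>v p"
  have n: "k < p \<Longrightarrow> n k \<ge> 1" for k
    using A by (simp add: in_Bp_def)
  have "block_lift p n z \<noteq> 0\<^sub>v (tot p n)"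
  proof
    assume "block_lift p n z = 0\<^sub>v (tot p n)"
    then have "z $ k = 0" if "k < p" for k
      using block_sum_block_lift[of k p n z] that n grp_less_tot[OF that]
      by (simp add: block_sum_def)
    with z show False
      by (metis carrier_vecD eq_vecI index_zero_vec)
  qed
  then have "block_lift p n z \<bullet> (A *\<^sub>v block_lift p n z) > 0"
    using pd pos_def_mat_iff[OF in_Bp_carrier[OF A] in_Bp_symmetric[OF A]]
    by (simp add: block_lift_def)
  then show "z \<bullet> (avg_mat p n b c *\<^sub>v z) > 0"
    by (simp add: quadratic_form_block_lift[OF A z(1)])
qed

lemma pos_def_if_pos_def_avg_mat:
  assumes A: "in_Bp p n b c A" and pd: "pos_def_mat (avg_mat p n b c)"
  shows "pos_def_mat A"
  unfolding pos_def_mat_iff[OF in_Bp_carrier[OF A] in_Bp_symmetric[OF A]]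
proof (intro ballI impI)
  fix x :: "real vec"
  assume x: "x \<in> carrier_vec (tot p n)" "x \<noteq> 0\<^sub>v (tot p n)"
  show "x \<bullet> (A *\<^sub>v x) > 0"
  proof (cases "vec p (block_sum n x) = 0\<^sub>v p")
    case True
    then have "block_sum n x k = 0" if "k < p" for k
      using that by (metis index_vec index_zero_vec(1))
    then show ?thesis
      by (rule quadratic_form_pos_if_block_sums_zero[OF A x])
  next
    case False
    then have "vec p (block_sum n x) \<bullet> (avg_mat p n b c *\<^sub>v vec p (block_sum n x)) > 0"
      using pd pos_def_mat_iff[OF avg_mat_carrier avg_mat_symmetric] by simp
    then show ?thesis
      using quadratic_form_avg_mat_le[OF A x(1)] by linarith
  qed
qed

theorem theorem2:
  fixes p :: nat and n :: "nat \<Rightarrow> nat" and b :: "nat \<Rightarrow> real"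
    and c :: "nat \<Rightarrow> nat \<Rightarrow> real" and A :: "real mat"
  assumes "in_Bp p n b c A"
  shows "(pos_def_mat A \<longleftrightarrow> pos_def_mat (block_avg p n A)) \<and>
         block_avg p n A = mat p p (\<lambda>(k, l).
            if k = l then 1 / real (n k) + (real (n k) - 1) / real (n k) * b k
            else if k < l then c k l else c l k)"
  using block_avg_eq_avg_mat[OF assms] avg_mat_eq[of p n] assms[unfolded in_Bp_def]
    pos_def_avg_mat_if_pos_def[OF assms] pos_def_if_pos_def_avg_mat[OF assms]
  by auto

end
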